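(* Let $\chi$ and $\widetilde\chi$ be two Hecke characters of infinity type $(-2,0)$ as in the context. Then the $\mathscr{O}_F$-submodules $\mathcal{L}_{\chi,\operatorname{Eis}}=\sum_{[\mathfrak{a}]\in\operatorname{Cl}(K)}\mathscr{O}_F\,E_{\chi,\mathfrak{a}}$ and $\mathcal{L}_{\widetilde\chi,\operatorname{Eis}}=\sum_{[\mathfrak{a}]\in\operatorname{Cl}(K)}\mathscr{O}_F\,E_{\widetilde\chi,\mathfrak{a}}$ coincide; i.e. $\mathcal{L}_{\operatorname{Eis}}$ does not depend on the choice of $\chi$.
   Context: $K\subset\mathbb{C}$ is imaginary quadratic, with ring of integers $\mathscr{O}$, $\mathscr{O}^\times=\{\pm1\}$, class number $h$, class group $\operatorname{Cl}(K)$, Hilbert class field $H$. A Hecke character of infinity type $(-2,0)$ is a homomorphism $\chi$ from fractional ideals of $K$ to $\mathbb{C}^\times$ with $\chi((\alpha))=\alpha^{-2}$ for $\alpha\in K^\times$. $F$ is a finite Galois extension of $H$ containing the values of $\chi$ (hence of every such character, since they differ by characters of $\operatorname{Cl}(K)$) and the $h$-th roots of unity. $\mathbb{H}_3=\{u=z+jv:z\in\mathbb{C},v>0\}$. With $\eta(u,c,d,s)=\dfrac{v^s[(\overline{cz+d})^2dz-(\bar cv)^2d\bar z+2(\overline{cz+d})\bar cv\,dv]}{(|cz+d|^2+|c|^2v^2)^{2+s}}$, $E_{\chi,\mathfrak{a}}$ is the value at $s=0$ of the analytic continuation of $\chi(\mathfrak{a})^{-1}\operatorname{N}(\mathfrak{a})^s\sum_{(c,d)\in\mathfrak{a}\times\mathfrak{a},\,(c)+(d)=\mathfrak{a}}\eta(u,c,d,s)$;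 it depends only on the class $[\mathfrak{a}]$. *)

theory Defs
  imports "HOL-Complex_Analysis.Complex_Analysis" "HOL-Computational_Algebra.Polynomial"
begin

definition alg_int :: "complex \<Rightarrow> bool" where
  "alg_int x \<longleftrightarrow> (\<exists>p :: int poly. lead_coeff p = 1 \<and> poly (map_poly of_int p) x = 0)"

definition ints_of :: "complex set \<Rightarrow> complex set" where
  "ints_of L = {x \<in> L. alg_int x}"

definition units_of_ring :: "complex set \<Rightarrow> complex set" where
  "units_of_ring R = {u \<in> R. \<exists>v \<in> R. u * v = 1}"

definition subfield :: "complex set \<Rightarrow> bool" where
  "subfield S \<longleftrightarrow> 0 \<in> S \<and> 1 \<in> S \<and> (\<forall>x\<in>S. \<forall>y\<in>S. x + y \<in> S \<and> x - y \<in> S \<and> x * y \<in> S)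
     \<and> (\<forall>x\<in>S. x \<noteq> 0 \<longrightarrow> inverse x \<in> S)"

definition imag_quadratic :: "complex set \<Rightarrow> bool" where
  "imag_quadratic K \<longleftrightarrow> (\<exists>D :: int. D < 0 \<and>
      K = {a + b * csqrt (of_int D) | a b. a \<in> \<rat> \<and> b \<in> \<rat>})"

definition O_submod :: "complex set \<Rightarrow> complex set \<Rightarrow> bool" where
  "O_submod K I \<longleftrightarrow> 0 \<in> I \<and> (\<forall>x\<in>I. \<forall>y\<in>I. x + y \<in> I) \<and> (\<forall>r\<in>ints_of K. \<forall>x\<in>I. r * x \<in> I)"

definition ideal_gen :: "complex set \<Rightarrow> complex set \<Rightarrow> complex set" where
  "ideal_gen K S = \<Inter>{I. S \<subseteq> I \<and> O_submod K I}"

definition frac_ideal :: "complex set \<Rightarrow> complex set \<Rightarrow> bool" where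
  "frac_ideal K a \<longleftrightarrow> a \<subseteq> K \<and> a \<noteq> {0} \<and> O_submod K a \<and>
      (\<exists>c \<in> ints_of K. c \<noteq> 0 \<and> (\<forall>x\<in>a. c * x \<in> ints_of K))"

definition ideal_mult :: "complex set \<Rightarrow> complex set \<Rightarrow> complex set \<Rightarrow> complex set" where
  "ideal_mult K a b = ideal_gen K {x * y | x y. x \<in> a \<and> y \<in> b}"

definition ideal_equiv :: "complex set \<Rightarrow> complex set \<Rightarrow> complex set \<Rightarrow> bool" where
  "ideal_equiv K a b \<longleftrightarrow> (\<exists>\<alpha>\<in>K. \<alpha> \<noteq> 0 \<and> b = (\<lambda>x. \<alpha> * x) ` a)"

definition class_group :: "complex set \<Rightarrow> complex set set set" where
  "class_group K = {{b. frac_ideal K b \<and> ideal_equiv K a b} | a. frac_ideal K a}"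

definition class_number :: "complex set \<Rightarrow> nat" where
  "class_number K = card (class_group K)"

definition ideal_norm :: "complex set \<Rightarrow> complex set \<Rightarrow> real" where
  "ideal_norm K a = (THE r. r > 0 \<and> ideal_mult K a (cnj ` a) = ideal_gen K {complex_of_real r})"

definition hecke_char_m2 :: "complex set \<Rightarrow> (complex set \<Rightarrow> complex) \<Rightarrow> bool" where
  "hecke_char_m2 K chi \<longleftrightarrow>
     (\<forall>a. frac_ideal K a \<longrightarrow> chi a \<noteq> 0) \<and>
     (\<forall>a b. frac_ideal K a \<longrightarrow> frac_ideal K b \<longrightarrow> chi (ideal_mult K a b) = chi a * chi b) \<and>
     (\<forall>\<alpha>\<in>K. \<alpha> \<noteq> 0 \<longrightarrow> chi (ideal_gen K {\<alpha>}) = inverse (\<alpha> ^ 2))"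

definition fin_ext :: "complex set \<Rightarrow> complex set \<Rightarrow> bool" where
  "fin_ext K L \<longleftrightarrow> subfield K \<and> subfield L \<and> K \<subseteq> L \<and>
     (\<exists>B. finite B \<and> B \<subseteq> L \<and> L = {(\<Sum>b\<in>B. f b * b) | f. \<forall>b\<in>B. f b \<in> K})"

definition auts :: "complex set \<Rightarrow> complex set \<Rightarrow> (complex \<Rightarrow> complex) set" where
  "auts K L = {\<sigma>. bij_betw \<sigma> L L \<and> (\<forall>x\<in>L. \<forall>y\<in>L. \<sigma> (x + y) = \<sigma> x + \<sigma> y \<and> \<sigma> (x * y) = \<sigma> x * \<sigma> y)
      \<and> (\<forall>x\<in>K. \<sigma> x = x) \<and> (\<forall>x. x \<notin> L \<longrightarrow> \<sigma> x = x)}"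

definition galois_ext :: "complex set \<Rightarrow> complex set \<Rightarrow> bool" where
  "galois_ext K L \<longleftrightarrow> fin_ext K L \<and> {x \<in> L. \<forall>\<sigma>\<in>auts K L. \<sigma> x = x} = K"

definition abelian_ext :: "complex set \<Rightarrow> complex set \<Rightarrow> bool" where
  "abelian_ext K L \<longleftrightarrow> galois_ext K L \<and> (\<forall>\<sigma>\<in>auts K L. \<forall>\<tau>\<in>auts K L. \<sigma> \<circ> \<tau> = \<tau> \<circ> \<sigma>)"

definition ring_ideal :: "complex set \<Rightarrow> complex set \<Rightarrow> bool" where
  "ring_ideal R I \<longleftrightarrow> I \<subseteq> R \<and> 0 \<in> I \<and> (\<forall>x\<in>I. \<forall>y\<in>I. x + y \<in> I) \<and> (\<forall>r\<in>R. \<forall>x\<in>I. r * x \<in> I)"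

definition ring_ideal_gen :: "complex set \<Rightarrow> complex set \<Rightarrow> complex set" where
  "ring_ideal_gen R S = \<Inter>{I. ring_ideal R I \<and> S \<subseteq> I}"

definition prime_ring_ideal :: "complex set \<Rightarrow> complex set \<Rightarrow> bool" where
  "prime_ring_ideal R P \<longleftrightarrow> ring_ideal R P \<and> P \<noteq> R \<and> P \<noteq> {0} \<and>
     (\<forall>x\<in>R. \<forall>y\<in>R. x * y \<in> P \<longrightarrow> x \<in> P \<or> y \<in> P)"

text \<open>L/K unramified (at all finite primes; K is imaginary so there is no ramification at
  infinity): every nonzero prime p of O_K generates a radical (= squarefree) ideal of O_L.\<close>
definition unramified_ext :: "complex set \<Rightarrow> complex set \<Rightarrow> bool" where
  "unramified_ext K L \<longleftrightarrow> (\<forall>P. prime_ring_ideal (ints_of K) P \<longrightarrow>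
      (let J = ring_ideal_gen (ints_of L) P in
        \<forall>x\<in>ints_of L. (\<exists>n. x ^ n \<in> J) \<longrightarrow> x \<in> J))"

definition hilbert_class_field :: "complex set \<Rightarrow> complex set \<Rightarrow> bool" where
  "hilbert_class_field K H \<longleftrightarrow> abelian_ext K H \<and> unramified_ext K H \<and>
     (\<forall>L. abelian_ext K L \<and> unramified_ext K L \<longrightarrow> L \<subseteq> H)"

text \<open>Value at s = 0 of the meromorphic continuation of s \<mapsto> sum over A of F s x
  (the series converging absolutely on a right half-plane). Holomorphy on the complement of a
  closed discrete set not containing 0 is required; 0 if no such continuation exists.\<close>
definition cont_at_0 :: "(complex \<Rightarrow> 'b \<Rightarrow> complex) \<Rightarrow> 'b set \<Rightarrow> complex" where
  "cont_at_0 F A =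
    (let P = (\<lambda>w. \<exists>g S \<sigma>. \<not> (\<exists>z. z islimpt S) \<and> 0 \<notin> S \<and> g holomorphic_on (- S) \<and>
                 (\<forall>s. Re s > \<sigma> \<longrightarrow> s \<notin> S \<and> F s summable_on A \<and> g s = infsum (F s) A) \<and> g 0 = w)
     in if \<exists>w. P w then (THE w. P w) else 0)"

text \<open>Coefficients of eta(u,c,d,s) with respect to dz (k=0), d zbar (k=1), dv (k=2), u = z + jv.\<close>
definition eta :: "complex \<Rightarrow> real \<Rightarrow> complex \<Rightarrow> complex \<Rightarrow> complex \<Rightarrow> nat \<Rightarrow> complex" where
  "eta z v c d s k =
    (complex_of_real v powr s *
      (if k = 0 then (cnj (c * z + d))\<^sup>2
       else if k = 1 then - (cnj c * complex_of_real v)\<^sup>2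
       else if k = 2 then 2 * cnj (c * z + d) * cnj c * complex_of_real v
       else 0))
    / complex_of_real ((cmod (c * z + d))\<^sup>2 + (cmod c)\<^sup>2 * v\<^sup>2) powr (2 + s)"

definition coprime_pairs :: "complex set \<Rightarrow> complex set \<Rightarrow> (complex \<times> complex) set" where
  "coprime_pairs K a = {(c, d). c \<in> a \<and> d \<in> a \<and> ideal_gen K {c, d} = a}"

text \<open>E_{chi,a} as a 1-form on H_3: (z, v) with v > 0, coefficient index k.\<close>
definition E_form :: "complex set \<Rightarrow> (complex set \<Rightarrow> complex) \<Rightarrow> complex set
                      \<Rightarrow> complex \<Rightarrow> real \<Rightarrow> nat \<Rightarrow> complex" where
  "E_form K chi a z v k =
    (if v > 0 then
       cont_at_0 (\<lambda>s (c, d). inverse (chi a) * complex_of_real (ideal_norm K a) powr s * eta z v c d s k)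
                 (coprime_pairs K a)
     else 0)"

definition L_Eis :: "complex set \<Rightarrow> complex set \<Rightarrow> (complex set \<Rightarrow> complex)
                    \<Rightarrow> (complex \<Rightarrow> real \<Rightarrow> nat \<Rightarrow> complex) set" where
  "L_Eis K F chi = {(\<lambda>z v k. \<Sum>a\<in>A. r a * E_form K chi a z v k) | A r.
      finite A \<and> (\<forall>a\<in>A. frac_ideal K a) \<and> (\<forall>a\<in>A. r a \<in> ints_of F)}"

end

theory Submission
  imports Defs "Jordan_Normal_Form.Char_Poly"
begin

text \<open>Two Hecke characters of infinity type (-2,0) differ by a character
  \<open>\<psi> = chi2 / chi\<close> of the ideal class group, so \<open>\<psi> ^ h = 1\<close>: its values are
  \<open>h\<close>-th roots of unity, hence algebraic integers lying in F. The continuation at s = 0 is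
  linear, so E(chi, a) = chi(a)^-1 E(1, a), and the generators of the two lattices differ by the
  factors \<open>\<psi>(a)\<close> and their inverses. The relation \<open>\<psi> ^ h = 1\<close> needs the class
  group to be a finite group. Inverses exist because \<open>a * cnj a\<close> is principal: it is
  generated by the greatest common divisor of the norms of the elements of \<open>a\<close>, by
  polarization. Finiteness is forced by the hypotheses: for h = 0 every complex number
  would be an h-th root of unity in the countable field F.\<close>

section \<open>Algebraic integers\<close>

lemma alg_int_iff_algebraic_int: "alg_int x \<longleftrightarrow> algebraic_int x"
  by (auto simp: alg_int_def algebraic_int_altdef_ipoly)

lemma algebraic_int_int_matrix_eigenvalue:
  fixes v :: "nat \<Rightarrow> complex" and M :: "nat \<Rightarrow> nat \<Rightarrow> int"
  assumes eigen: "\<And>i. i < m \<Longrightarrow> y * v i = (\<Sum>j<m. of_int (M i j) * v j)"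
    and nonzero: "k < m" "v k \<noteq> 0"
  shows "algebraic_int y"
proof -
  define B :: "int mat" where "B = mat m m (\<lambda>(i, j). M i j)"
  define A :: "complex mat" where "A = map_mat of_int B"
  have B: "B \<in> carrier_mat m m" and A: "A \<in> carrier_mat m m"
    by (simp_all add: A_def B_def)
  have "A *\<^sub>v vec m v = y \<cdot>\<^sub>v vec m v"
    using eigen
    by (intro eq_vecI) (simp_all add: A_def B_def mult_mat_vec_def scalar_prod_def atLeast0LessThan)
  moreover have "vec m v \<noteq> 0\<^sub>v m"
    using nonzero by (metis index_vec index_zero_vec(1))
  ultimately have "eigenvalue A y"
    using A unfolding eigenvalue_def eigenvector_def by (intro exI[of _ "vec m v"]) simp
  then have "poly (char_poly A) y = 0"
    using eigenvalue_root_char_poly[OF A] by simp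
  moreover have "char_poly A = map_poly of_int (char_poly B)"
    unfolding A_def by (rule of_int_hom.char_poly_hom[OF B])
  moreover have "lead_coeff (char_poly B) = 1"
    using degree_monic_char_poly[OF B] by simp
  ultimately show ?thesis
    unfolding algebraic_int_altdef_ipoly by metis
qed

lemma algebraic_int_monic_relation:
  fixes x :: complex
  assumes "algebraic_int x"
  obtains n c where "n \<ge> 1" "x ^ n = (\<Sum>l<n. of_int (c l) * x ^ l)"
proof -
  obtain p :: "int poly" where p0: "poly (map_poly of_int p) x = 0" and p1: "lead_coeff p = 1"
    using assms unfolding algebraic_int_altdef_ipoly by blast
  define n where "n = degree p"
  have "0 = (\<Sum>i\<le>n. of_int (coeff p i) * x ^ i)"
    using p0 by (simp add: poly_altdef degree_map_poly coeff_map_poly n_def)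
  also have "\<dots> = (\<Sum>i<n. of_int (coeff p i) * x ^ i) + x ^ n"
    using p1 by (simp add: lessThan_Suc_atMost[symmetric] n_def)
  finally have rel: "x ^ n = (\<Sum>i<n. of_int (- coeff p i) * x ^ i)"
    by (simp add: sum_negf eq_neg_iff_add_eq_0 add.commute)
  then have "n \<ge> 1"
    by (cases n) auto
  then show ?thesis
    using rel by (rule that)
qed

definition int_span :: "(nat \<Rightarrow> complex) \<Rightarrow> nat \<Rightarrow> complex set" where
  "int_span e N = range (\<lambda>c :: nat \<Rightarrow> int. \<Sum>j<N. of_int (c j) * e j)"

lemma int_span_add:
  assumes "a \<in> int_span e N" "b \<in> int_span e N"
  shows "a + b \<in> int_span e N"
proof -
  obtain c d where "a = (\<Sum>j<N. of_int (c j) * e j)" "b = (\<Sum>j<N. of_int (d j) * e j)"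
    using assms unfolding int_span_def by blast
  then have "a + b = (\<Sum>j<N. of_int (c j + d j) * e j)"
    by (simp add: sum.distrib[symmetric] algebra_simps)
  then show ?thesis
    unfolding int_span_def by (rule range_eqI[where x = "\<lambda>j. c j + d j"])
qed

lemma int_span_of_int_mult:
  assumes "a \<in> int_span e N"
  shows "of_int k * a \<in> int_span e N"
proof -
  obtain c where "a = (\<Sum>j<N. of_int (c j) * e j)"
    using assms unfolding int_span_def by blast
  then have "of_int k * a = (\<Sum>j<N. of_int (k * c j) * e j)"
    by (simp add: sum_distrib_left algebra_simps)
  then show ?thesis
    unfolding int_span_def by (rule range_eqI[where x = "\<lambda>j. k * c j"])
qed

lemma int_span_sum:
  assumes "finite L" "\<And>l. l \<in> L \<Longrightarrow> f l \<in> int_span e N"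
  shows "sum f L \<in> int_span e N"
  using assms
proof (induction L rule: finite_induct)
  case empty
  show ?case
    unfolding int_span_def by (rule range_eqI[where x = "\<lambda>_. 0"]) simp
qed (simp add: int_span_add)

lemma int_span_basis:
  assumes "j < N"
  shows "e j \<in> int_span e N"
proof -
  have "(\<Sum>i<N. of_int (if i = j then 1 else 0) * e i) = (\<Sum>i<N. if i = j then e i else 0)"
    by (intro sum.cong) auto
  then have "e j = (\<Sum>i<N. of_int (if i = j then 1 else 0) * e i)"
    using assms by simp
  then show ?thesis
    unfolding int_span_def by (rule range_eqI[where x = "\<lambda>i. if i = j then 1 else 0"])
qed

lemma algebraic_int_int_span_stable:
  assumes stable: "\<And>i. i < N \<Longrightarrow> y * e i \<in> int_span e N"
    and nonzero: "k < N" "e k \<noteq> 0"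
  shows "algebraic_int y"
proof -
  have "\<forall>i. \<exists>c. i < N \<longrightarrow> y * e i = (\<Sum>j<N. of_int (c j) * e j)"
    using stable unfolding int_span_def by blast
  then obtain M where "\<And>i. i < N \<Longrightarrow> y * e i = (\<Sum>j<N. of_int (M i j) * e j)"
    using choice[of "\<lambda>i c. i < N \<longrightarrow> y * e i = (\<Sum>j<N. of_int (c j) * e j)"] by blast
  then show ?thesis
    using nonzero by (rule algebraic_int_int_matrix_eigenvalue)
qed

lemma power_in_int_span:
  assumes "n \<ge> 1" and rel: "x ^ n = (\<Sum>l<n. of_int (c l) * x ^ l)"
  shows "x ^ i \<in> int_span (\<lambda>l. x ^ l) n"
proof (induction i rule: less_induct)
  case (less i)
  show ?case
  proof (cases "i < n")
    case True
    then show ?thesis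
      by (rule int_span_basis)
  next
    case False
    then have "x ^ i = x ^ (i - n) * x ^ n"
      by (simp add: power_add[symmetric])
    also have "\<dots> = (\<Sum>l<n. of_int (c l) * x ^ (i - n + l))"
      unfolding rel by (simp add: sum_distrib_left power_add algebra_simps)
    also have "\<dots> \<in> int_span (\<lambda>l. x ^ l) n"
      using False \<open>n \<ge> 1\<close> by (intro int_span_sum int_span_of_int_mult less.IH) auto
    finally show ?thesis .
  qed
qed

lemma mult_in_int_span:
  assumes "a \<in> int_span f n" "b \<in> int_span g m"
    and "\<And>i j. i < n \<Longrightarrow> j < m \<Longrightarrow> f i * g j \<in> int_span e N"
  shows "a * b \<in> int_span e N"
proof -
  obtain c d where a: "a = (\<Sum>i<n. of_int (c i) * f i)" and b: "b = (\<Sum>j<m. of_int (d j) * g j)"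
    using assms(1,2) unfolding int_span_def by blast
  have "a * b = (\<Sum>i<n. \<Sum>j<m. of_int (c i * d j) * (f i * g j))"
    unfolding a b sum_product by (intro sum.cong refl) (simp add: mult_ac)
  also have "\<dots> \<in> int_span e N"
    using assms(3) by (intro int_span_sum int_span_of_int_mult) auto
  finally show ?thesis .
qed

text \<open>If \<open>x\<close> and \<open>y\<close> satisfy monic relations of degrees \<open>n\<close> and \<open>m\<close>, the
  \<open>n * m\<close> monomials \<open>x ^ i * y ^ j\<close> (\<open>i < n\<close>, \<open>j < m\<close>) span a \<open>\<int>\<close>-module containing all
  monomials, hence stable under multiplication by \<open>x + y\<close> and \<open>x * y\<close>.\<close>

lemma monomial_in_int_span:
  assumes "n \<ge> 1" "x ^ n = (\<Sum>l<n. of_int (c l) * x ^ l)"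
    and "m \<ge> 1" "y ^ m = (\<Sum>l<m. of_int (d l) * y ^ l)"
  shows "x ^ i * y ^ j \<in> int_span (\<lambda>k. x ^ (k div m) * y ^ (k mod m)) (n * m)"
proof (rule mult_in_int_span[OF power_in_int_span[OF assms(1,2)] power_in_int_span[OF assms(3,4)]])
  fix i j
  assume "i < n" "j < m"
  have "i * m + j < (i + 1) * m"
    using \<open>j < m\<close> by simp
  also have "\<dots> \<le> n * m"
    using \<open>i < n\<close> by (intro mult_right_mono) auto
  finally have "i * m + j < n * m" .
  then have "(\<lambda>k. x ^ (k div m) * y ^ (k mod m)) (i * m + j)
      \<in> int_span (\<lambda>k. x ^ (k div m) * y ^ (k mod m)) (n * m)"
    by (rule int_span_basis)
  then show "x ^ i * y ^ j \<in> int_span (\<lambda>k. x ^ (k div m) * y ^ (k mod m)) (n * m)"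
    using \<open>j < m\<close> by simp
qed

lemma algebraic_int_add:
  fixes x y :: complex
  assumes "algebraic_int x" "algebraic_int y"
  shows "algebraic_int (x + y)"
proof -
  obtain n c where x: "n \<ge> 1" "x ^ n = (\<Sum>l<n. of_int (c l) * x ^ l)"
    using assms(1) by (rule algebraic_int_monic_relation)
  obtain m d where y: "m \<ge> 1" "y ^ m = (\<Sum>l<m. of_int (d l) * y ^ l)"
    using assms(2) by (rule algebraic_int_monic_relation)
  show ?thesis
  proof (rule algebraic_int_int_span_stable
      [where e = "\<lambda>k. x ^ (k div m) * y ^ (k mod m)" and N = "n * m" and k = 0])
    fix k
    have "(x + y) * (x ^ (k div m) * y ^ (k mod m))
        = x ^ Suc (k div m) * y ^ (k mod m) + x ^ (k div m) * y ^ Suc (k mod m)"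
      by (simp add: algebra_simps)
    also have "\<dots> \<in> int_span (\<lambda>k. x ^ (k div m) * y ^ (k mod m)) (n * m)"
      by (intro int_span_add monomial_in_int_span[OF x y])
    finally show "(x + y) * (x ^ (k div m) * y ^ (k mod m))
        \<in> int_span (\<lambda>k. x ^ (k div m) * y ^ (k mod m)) (n * m)" .
  qed (use x(1) y(1) in simp_all)
qed

lemma algebraic_int_mult:
  fixes x y :: complex
  assumes "algebraic_int x" "algebraic_int y"
  shows "algebraic_int (x * y)"
proof -
  obtain n c where x: "n \<ge> 1" "x ^ n = (\<Sum>l<n. of_int (c l) * x ^ l)"
    using assms(1) by (rule algebraic_int_monic_relation)
  obtain m d where y: "m \<ge> 1" "y ^ m = (\<Sum>l<m. of_int (d l) * y ^ l)"
    using assms(2) by (rule algebraic_int_monic_relation)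
  show ?thesis
  proof (rule algebraic_int_int_span_stable
      [where e = "\<lambda>k. x ^ (k div m) * y ^ (k mod m)" and N = "n * m" and k = 0])
    fix k
    have "(x * y) * (x ^ (k div m) * y ^ (k mod m)) = x ^ Suc (k div m) * y ^ Suc (k mod m)"
      by (simp add: algebra_simps)
    also have "\<dots> \<in> int_span (\<lambda>k. x ^ (k div m) * y ^ (k mod m)) (n * m)"
      by (rule monomial_in_int_span[OF x y])
    finally show "(x * y) * (x ^ (k div m) * y ^ (k mod m))
        \<in> int_span (\<lambda>k. x ^ (k div m) * y ^ (k mod m)) (n * m)" .
  qed (use x(1) y(1) in simp_all)
qed

lemma algebraic_int_of_quadratic:
  fixes z :: complex
  assumes "z ^ 2 = of_int T * z - of_int N"
  shows "algebraic_int z"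
proof (rule algebraic_int.intros[of "[:of_int N, - of_int T, 1:]"])
  show "poly [:of_int N, - of_int T, 1:] z = 0"
    using assms by (simp add: algebra_simps power2_eq_square)
qed (auto simp: coeff_pCons split: nat.split)

lemma algebraic_int_root_of_unity:
  fixes \<zeta> :: complex
  assumes "\<zeta> ^ h = 1" "h > 0"
  shows "algebraic_int \<zeta>"
  by (rule algebraic_int_root[of 1 "monom 1 h"])
    (use assms in \<open>auto simp: poly_monom coeff_monom degree_monom_eq\<close>)

section \<open>Imaginary quadratic fields and their fractional ideals\<close>

lemma Rats_cnj: "(q :: complex) \<in> \<rat> \<Longrightarrow> cnj q = q"
  by (erule Rats_cases') simp

lemma int_ideal_generator:
  fixes J :: "int set"
  assumes add: "\<And>m n. m \<in> J \<Longrightarrow> n \<in> J \<Longrightarrow> m + n \<in> J"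
    and mult: "\<And>k n. n \<in> J \<Longrightarrow> k * n \<in> J"
    and "n \<in> J" "n \<noteq> 0"
  obtains g where "g > 0" "g \<in> J" "\<And>m. m \<in> J \<Longrightarrow> g dvd m"
proof -
  have "\<bar>n\<bar> \<in> J"
    using \<open>n \<in> J\<close> mult[OF \<open>n \<in> J\<close>, of "-1"] by (cases "n \<ge> 0") simp_all
  then have ex: "\<exists>k :: nat. 0 < k \<and> int k \<in> J"
    using \<open>n \<noteq> 0\<close> by (intro exI[of _ "nat \<bar>n\<bar>"]) simp
  define g where "g = int (LEAST k :: nat. 0 < k \<and> int k \<in> J)"
  have g: "g > 0" "g \<in> J"
    unfolding g_def using LeastI_ex[OF ex] by simp_all
  have "g dvd m" if "m \<in> J" for m
  proof -
    have "m + (- (m div g)) * g \<in> J"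
      using that g(2) by (intro add mult)
    then have mod_in_J: "m mod g \<in> J"
      by (simp add: minus_div_mult_eq_mod[symmetric])
    have "\<not> 0 < m mod g"
    proof
      assume "0 < m mod g"
      then have "g \<le> int (nat (m mod g))"
        using mod_in_J unfolding g_def by (intro of_nat_mono Least_le) simp
      then show False
        using \<open>0 < m mod g\<close> pos_mod_bound[OF \<open>g > 0\<close>, of m] by simp
    qed
    then show ?thesis
      using pos_mod_sign[OF \<open>g > 0\<close>, of m] by (simp add: dvd_eq_mod_eq_0)
  qed
  then show ?thesis
    using g that by blast
qed

lemma image_mult_image_mult:
  fixes \<alpha> \<beta> :: complex
  shows "(\<lambda>x. \<beta> * x) ` (\<lambda>x. \<alpha> * x) ` a = (\<lambda>x. (\<beta> * \<alpha>) * x) ` a"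
  unfolding image_image by (intro image_cong refl) (simp only: mult.assoc)

locale imag_quad =
  fixes K :: "complex set" and D :: int
  assumes D_neg: "D < 0"
    and K_eq: "K = {a + b * csqrt (of_int D) | a b. a \<in> \<rat> \<and> b \<in> \<rat>}"
begin

definition sqrt_D :: complex where "sqrt_D = csqrt (of_int D)"

lemma sqrt_D_square: "sqrt_D * sqrt_D = of_int D"
  unfolding sqrt_D_def using power2_csqrt[of "of_int D"] by (simp add: power2_eq_square)

lemma cnj_sqrt_D: "cnj sqrt_D = - sqrt_D"
proof -
  have "sqrt_D = \<i> * of_real (sqrt \<bar>of_int D\<bar>)"
    unfolding sqrt_D_def using D_neg by (subst csqrt_of_real_nonpos) auto
  then show ?thesis
    by simp
qed

lemma K_iff: "x \<in> K \<longleftrightarrow> (\<exists>a b. a \<in> \<rat> \<and> b \<in> \<rat> \<and> x = a + b * sqrt_D)"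
  unfolding K_eq sqrt_D_def by blast

lemma K_memI: "a \<in> \<rat> \<Longrightarrow> b \<in> \<rat> \<Longrightarrow> a + b * sqrt_D \<in> K"
  unfolding K_iff by blast

lemma K_memE:
  assumes "x \<in> K"
  obtains a b where "a \<in> \<rat>" "b \<in> \<rat>" "x = a + b * sqrt_D"
  using assms unfolding K_iff by blast

lemma Rats_subset_K: "q \<in> \<rat> \<Longrightarrow> q \<in> K"
  using K_memI[of q 0] by simp

lemma K_add:
  assumes "x \<in> K" "y \<in> K"
  shows "x + y \<in> K"
proof -
  obtain a b c d where abcd: "a \<in> \<rat>" "b \<in> \<rat>" "c \<in> \<rat>" "d \<in> \<rat>"
    and "x = a + b * sqrt_D" "y = c + d * sqrt_D"
    using assms by (metis K_memE)
  then have "x + y = (a + c) + (b + d) * sqrt_D"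
    by (simp add: algebra_simps)
  also have "\<dots> \<in> K"
    using abcd by (intro K_memI Rats_add)
  finally show ?thesis .
qed

lemma K_mult:
  assumes "x \<in> K" "y \<in> K"
  shows "x * y \<in> K"
proof -
  obtain a b c d where abcd: "a \<in> \<rat>" "b \<in> \<rat>" "c \<in> \<rat>" "d \<in> \<rat>"
    and "x = a + b * sqrt_D" "y = c + d * sqrt_D"
    using assms by (metis K_memE)
  then have "x * y = (a * c + b * d * of_int D) + (a * d + b * c) * sqrt_D"
    by (simp add: algebra_simps flip: sqrt_D_square)
  also have "\<dots> \<in> K"
    using abcd by (intro K_memI Rats_add Rats_mult Rats_of_int)
  finally show ?thesis .
qed

lemma K_cnj_eq: "a \<in> \<rat> \<Longrightarrow> b \<in> \<rat> \<Longrightarrow> cnj (a + b * sqrt_D) = a - b * sqrt_D"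
  by (simp add: Rats_cnj cnj_sqrt_D)

lemma K_cnj: "x \<in> K \<Longrightarrow> cnj x \<in> K"
  by (elim K_memE) (metis K_cnj_eq K_memI Rats_minus_iff diff_conv_add_uminus mult_minus_left)

lemma K_norm_Rats:
  assumes "x \<in> K"
  shows "x * cnj x \<in> \<rat>"
proof -
  obtain a b where ab: "a \<in> \<rat>" "b \<in> \<rat>" and x: "x = a + b * sqrt_D"
    using assms by (rule K_memE)
  have "x * cnj x = (a + b * sqrt_D) * (a - b * sqrt_D)"
    by (simp only: x K_cnj_eq[OF ab])
  also have "\<dots> = a * a - b * b * of_int D"
    by (simp add: algebra_simps flip: sqrt_D_square)
  also have "\<dots> \<in> \<rat>"
    using ab by simp
  finally show ?thesis .
qed

lemma K_trace_Rats: "x \<in> K \<Longrightarrow> x + cnj x \<in> \<rat>"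
  by (elim K_memE) (simp add: Rats_cnj cnj_sqrt_D)

lemma K_inverse:
  assumes "x \<in> K"
  shows "inverse x \<in> K"
proof (cases "x = 0")
  case True
  then show ?thesis
    using Rats_subset_K[of 0] by simp
next
  case False
  then have "inverse x = cnj x * inverse (x * cnj x)"
    by (simp add: field_simps)
  also have "\<dots> \<in> K"
    by (rule K_mult[OF K_cnj[OF assms] Rats_subset_K[OF Rats_inverse[OF K_norm_Rats[OF assms]]]])
  finally show ?thesis .
qed

lemma countable_K: "countable K"
proof -
  have "K = (\<lambda>(a, b). a + b * sqrt_D) ` (\<rat> \<times> \<rat>)"
    by (auto simp: K_iff image_iff; blast)
  moreover have "countable (\<rat> :: complex set)"
    unfolding Rats_def by simp
  ultimately show ?thesis
    by simp
qed

abbreviation OK where "OK \<equiv> ints_of K"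

lemma OK_iff: "x \<in> OK \<longleftrightarrow> x \<in> K \<and> algebraic_int x"
  unfolding ints_of_def alg_int_iff_algebraic_int by simp

lemma OK_subset_K: "x \<in> OK \<Longrightarrow> x \<in> K"
  unfolding OK_iff by simp

lemma OK_add: "x \<in> OK \<Longrightarrow> y \<in> OK \<Longrightarrow> x + y \<in> OK"
  unfolding OK_iff by (simp add: K_add algebraic_int_add)

lemma OK_mult: "x \<in> OK \<Longrightarrow> y \<in> OK \<Longrightarrow> x * y \<in> OK"
  unfolding OK_iff by (simp add: K_mult algebraic_int_mult)

lemma OK_of_int: "of_int k \<in> OK"
  unfolding OK_iff by (simp add: Rats_subset_K)

lemma OK_cnj: "x \<in> OK \<Longrightarrow> cnj x \<in> OK"
  unfolding OK_iff by (simp add: K_cnj)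

lemma OK_norm_Ints: "x \<in> OK \<Longrightarrow> x * cnj x \<in> \<int>"
  by (intro rational_algebraic_int_is_int) (auto simp: OK_iff K_norm_Rats algebraic_int_mult)

lemma OK_of_trace_norm:
  assumes "x \<in> K" "x + cnj x \<in> \<int>" "x * cnj x \<in> \<int>"
  shows "x \<in> OK"
proof -
  obtain T N where "x + cnj x = of_int T" "x * cnj x = of_int N"
    using assms(2,3) by (metis Ints_cases)
  moreover have "x ^ 2 = (x + cnj x) * x - x * cnj x"
    by (simp add: algebra_simps power2_eq_square)
  ultimately have "algebraic_int x"
    by (intro algebraic_int_of_quadratic[of x T N]) simp
  then show ?thesis
    using assms(1) by (simp add: OK_iff)
qed

lemma K_int_multiple_in_OK:
  assumes "x \<in> K"
  obtains d :: int where "d > 0" "of_int d * x \<in> OK"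
proof -
  obtain t1 t2 :: int where t: "t2 > 0" "x + cnj x = of_int t1 / of_int t2"
    using K_trace_Rats[OF assms] by (metis Rats_cases')
  obtain n1 n2 :: int where n: "n2 > 0" "x * cnj x = of_int n1 / of_int n2"
    using K_norm_Rats[OF assms] by (metis Rats_cases')
  define d where "d = t2 * n2"
  define y where "y = of_int d * x"
  have "y + cnj y \<in> \<int>"
  proof -
    have "y + cnj y = of_int n2 * (of_int t2 * (x + cnj x))"
      by (simp add: y_def d_def algebra_simps)
    also have "\<dots> = of_int (n2 * t1)"
      using t by simp
    finally show ?thesis
      by simp
  qed
  moreover have "y * cnj y \<in> \<int>"
  proof -
    have "y * cnj y = of_int (t2 * t2 * n2) * (of_int n2 * (x * cnj x))"
      by (simp add: y_def d_def algebra_simps)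
    also have "\<dots> = of_int (t2 * t2 * n2 * n1)"
      using n by simp
    finally show ?thesis
      by simp
  qed
  moreover have "y \<in> K"
    unfolding y_def by (intro K_mult Rats_subset_K assms) simp
  ultimately have "y \<in> OK"
    by (intro OK_of_trace_norm)
  moreover have "d > 0"
    using t n by (simp add: d_def)
  ultimately show ?thesis
    using that unfolding y_def by blast
qed

lemma O_submodI:
  assumes "0 \<in> I" "\<And>x y. x \<in> I \<Longrightarrow> y \<in> I \<Longrightarrow> x + y \<in> I"
    and "\<And>r x. r \<in> OK \<Longrightarrow> x \<in> I \<Longrightarrow> r * x \<in> I"
  shows "O_submod K I"
  using assms unfolding O_submod_def by blast

lemma
  assumes "O_submod K I"
  shows O_submod_zero: "0 \<in> I"
    and O_submod_add: "x \<in> I \<Longrightarrow> y \<in> I \<Longrightarrow> x + y \<in> I"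
    and O_submod_mult: "r \<in> OK \<Longrightarrow> x \<in> I \<Longrightarrow> r * x \<in> I"
  using assms unfolding O_submod_def by blast+

lemma O_submod_of_int_mult: "O_submod K I \<Longrightarrow> x \<in> I \<Longrightarrow> of_int k * x \<in> I"
  using O_submod_mult[OF _ OK_of_int] by blast

lemma O_submod_OK: "O_submod K OK"
  by (rule O_submodI) (auto intro: OK_add OK_mult OK_of_int[of 0, simplified])

lemma O_submod_K: "O_submod K K"
  by (rule O_submodI) (auto intro: K_add K_mult OK_subset_K Rats_subset_K)

lemma O_submod_preimage_mult: "O_submod K {z. c * z \<in> OK}"
proof (rule O_submodI)
  show "0 \<in> {z. c * z \<in> OK}"
    using OK_of_int[of 0] by simp
  show "u + v \<in> {z. c * z \<in> OK}" if "u \<in> {z. c * z \<in> OK}" "v \<in> {z. c * z \<in> OK}" for u v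
    using OK_add that by (simp add: distrib_left)
  show "r * u \<in> {z. c * z \<in> OK}" if "r \<in> OK" "u \<in> {z. c * z \<in> OK}" for r u
  proof -
    have "r * (c * u) \<in> OK"
      using OK_mult[OF that(1)] that(2) by simp
    then show ?thesis
      by (simp add: mult_ac)
  qed
qed

lemma O_submod_image_mult:
  assumes a: "O_submod K a"
  shows "O_submod K ((\<lambda>x. \<alpha> * x) ` a)"
proof (rule O_submodI)
  show "0 \<in> (\<lambda>x. \<alpha> * x) ` a"
    using O_submod_zero[OF a] by (intro image_eqI[of _ _ 0]) auto
next
  fix x y
  assume "x \<in> (\<lambda>x. \<alpha> * x) ` a" "y \<in> (\<lambda>x. \<alpha> * x) ` a"
  then obtain x' y' where "x' \<in> a" "y' \<in> a" "x = \<alpha> * x'" "y = \<alpha> * y'"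
    by blast
  then show "x + y \<in> (\<lambda>x. \<alpha> * x) ` a"
    using O_submod_add[OF a] by (intro image_eqI[of _ _ "x' + y'"]) (auto simp: distrib_left)
next
  fix r x
  assume "r \<in> OK" "x \<in> (\<lambda>x. \<alpha> * x) ` a"
  then obtain x' where "x' \<in> a" "x = \<alpha> * x'"
    by blast
  then show "r * x \<in> (\<lambda>x. \<alpha> * x) ` a"
    using O_submod_mult[OF a \<open>r \<in> OK\<close>] by (intro image_eqI[of _ _ "r * x'"]) (auto simp: mult.left_commute)
qed

lemma ideal_gen_submod: "O_submod K (ideal_gen K S)"
  unfolding ideal_gen_def O_submod_def by blast

lemma ideal_gen_superset: "S \<subseteq> ideal_gen K S"
  unfolding ideal_gen_def by blast

lemma ideal_gen_least: "O_submod K I \<Longrightarrow> S \<subseteq> I \<Longrightarrow> ideal_gen K S \<subseteq> I"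
  unfolding ideal_gen_def by blast

lemma ideal_gen_mono: "S \<subseteq> T \<Longrightarrow> ideal_gen K S \<subseteq> ideal_gen K T"
  by (meson ideal_gen_least ideal_gen_superset ideal_gen_submod order_trans)

lemma ideal_gen_eq: "O_submod K I \<Longrightarrow> ideal_gen K I = I"
  using ideal_gen_least ideal_gen_superset by blast

lemma ideal_gen_singleton: "ideal_gen K {\<alpha>} = (\<lambda>x. \<alpha> * x) ` OK"
proof
  show "ideal_gen K {\<alpha>} \<subseteq> (\<lambda>x. \<alpha> * x) ` OK"
    using OK_of_int[of 1]
    by (intro ideal_gen_least O_submod_image_mult O_submod_OK) (auto intro: image_eqI[of _ _ 1])
  show "(\<lambda>x. \<alpha> * x) ` OK \<subseteq> ideal_gen K {\<alpha>}"
  proof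
    fix y
    assume "y \<in> (\<lambda>x. \<alpha> * x) ` OK"
    then obtain r where "r \<in> OK" "y = r * \<alpha>"
      by (auto simp: mult.commute)
    then show "y \<in> ideal_gen K {\<alpha>}"
      using O_submod_mult[OF ideal_gen_submod] ideal_gen_superset by blast
  qed
qed

lemma ideal_mult_commute: "ideal_mult K a b = ideal_mult K b a"
proof -
  have swap: "{x * y | x y. x \<in> A \<and> y \<in> B} \<subseteq> {x * y | x y. x \<in> B \<and> y \<in> A}"
    for A B :: "complex set"
  proof
    fix u
    assume "u \<in> {x * y | x y. x \<in> A \<and> y \<in> B}"
    then obtain x y where "x \<in> A" "y \<in> B" "u = x * y"
      by blast
    moreover from this have "u = y * x"
      by (simp add: mult.commute)
    ultimately show "u \<in> {x * y | x y. x \<in> B \<and> y \<in> A}"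
      by blast
  qed
  have "{x * y | x y. x \<in> a \<and> y \<in> b} = {x * y | x y. x \<in> b \<and> y \<in> a}"
    using swap[of a b] swap[of b a] by (rule subset_antisym)
  then show ?thesis
    unfolding ideal_mult_def by simp
qed

lemma ideal_mult_memI:
  assumes "x \<in> a" "y \<in> b"
  shows "x * y \<in> ideal_mult K a b"
proof -
  have "x * y \<in> {x * y | x y. x \<in> a \<and> y \<in> b}"
    using assms by blast
  then show ?thesis
    unfolding ideal_mult_def by (rule subsetD[OF ideal_gen_superset])
qed

lemma ideal_mult_submod: "O_submod K (ideal_mult K a b)"
  unfolding ideal_mult_def by (rule ideal_gen_submod)

lemma ideal_mult_least:
  assumes "O_submod K I" "\<And>x y. x \<in> a \<Longrightarrow> y \<in> b \<Longrightarrow> x * y \<in> I"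
  shows "ideal_mult K a b \<subseteq> I"
  unfolding ideal_mult_def using assms(2) by (intro ideal_gen_least[OF assms(1)]) blast

lemma ideal_mult_ideal_gen:
  "ideal_mult K (ideal_gen K T) c = ideal_gen K {t * z | t z. t \<in> T \<and> z \<in> c}"
proof
  define G where "G = {t * z | t z. t \<in> T \<and> z \<in> c}"
  define U where "U = {u. \<forall>z\<in>c. u * z \<in> ideal_gen K G}"
  have R: "O_submod K (ideal_gen K G)"
    by (rule ideal_gen_submod)
  have "O_submod K U"
  proof (rule O_submodI)
    show "0 \<in> U"
      unfolding U_def using O_submod_zero[OF R] by simp
    show "x + y \<in> U" if "x \<in> U" "y \<in> U" for x y
      using that O_submod_add[OF R] unfolding U_def by (simp add: distrib_right)
    show "r * x \<in> U" if "r \<in> OK" "x \<in> U" for r x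
      using that O_submod_mult[OF R] unfolding U_def by (simp add: mult.assoc)
  qed
  moreover have "T \<subseteq> U"
    using ideal_gen_superset[of G] unfolding U_def G_def by blast
  ultimately have TU: "ideal_gen K T \<subseteq> U"
    by (rule ideal_gen_least)
  have "{x * y | x y. x \<in> ideal_gen K T \<and> y \<in> c} \<subseteq> ideal_gen K G"
    using TU unfolding U_def by blast
  then show "ideal_mult K (ideal_gen K T) c \<subseteq> ideal_gen K G"
    unfolding ideal_mult_def by (rule ideal_gen_least[OF R])
  have "G \<subseteq> {x * y | x y. x \<in> ideal_gen K T \<and> y \<in> c}"
    using ideal_gen_superset[of T] unfolding G_def by blast
  then show "ideal_gen K G \<subseteq> ideal_mult K (ideal_gen K T) c"
    unfolding ideal_mult_def by (rule ideal_gen_mono)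
qed

lemma ideal_mult_assoc: "ideal_mult K (ideal_mult K a b) c = ideal_mult K a (ideal_mult K b c)"
proof -
  have rotate: "{t * z | t z. t \<in> {x * y | x y. x \<in> A \<and> y \<in> B} \<and> z \<in> C}
      \<subseteq> {t * z | t z. t \<in> {x * y | x y. x \<in> B \<and> y \<in> C} \<and> z \<in> A}" for A B C :: "complex set"
  proof
    fix u
    assume "u \<in> {t * z | t z. t \<in> {x * y | x y. x \<in> A \<and> y \<in> B} \<and> z \<in> C}"
    then obtain x y z where "x \<in> A" "y \<in> B" "z \<in> C" "u = (x * y) * z"
      by blast
    moreover from this have "u = (y * z) * x"
      by (simp add: mult_ac)
    ultimately show "u \<in> {t * z | t z. t \<in> {x * y | x y. x \<in> B \<and> y \<in> C} \<and> z \<in> A}"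
      by blast
  qed
  have "ideal_mult K (ideal_mult K a b) c \<subseteq> ideal_mult K (ideal_mult K b c) a"
    "ideal_mult K (ideal_mult K b c) a \<subseteq> ideal_mult K (ideal_mult K c a) b"
    "ideal_mult K (ideal_mult K c a) b \<subseteq> ideal_mult K (ideal_mult K a b) c"
    unfolding ideal_mult_def[of K a b] ideal_mult_def[of K b c] ideal_mult_def[of K c a]
      ideal_mult_ideal_gen by (intro ideal_gen_mono rotate)+
  then have "ideal_mult K (ideal_mult K a b) c = ideal_mult K (ideal_mult K b c) a"
    by blast
  with ideal_mult_commute[of a "ideal_mult K b c"] show ?thesis
    by simp
qed

lemma ideal_mult_principal:
  assumes "O_submod K a"
  shows "ideal_mult K (ideal_gen K {\<alpha>}) a = (\<lambda>x. \<alpha> * x) ` a"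
proof -
  have "{t * z | t z. t \<in> {\<alpha>} \<and> z \<in> a} = (\<lambda>x. \<alpha> * x) ` a"
    by auto
  then show ?thesis
    using assms by (simp add: ideal_mult_ideal_gen ideal_gen_eq O_submod_image_mult)
qed

lemma frac_idealI:
  assumes "a \<subseteq> K" "a \<noteq> {0}" "O_submod K a"
    and "c \<in> OK" "c \<noteq> 0" "\<And>x. x \<in> a \<Longrightarrow> c * x \<in> OK"
  shows "frac_ideal K a"
  unfolding frac_ideal_def using assms by blast

lemma frac_idealE:
  assumes "frac_ideal K a"
  obtains c where "c \<in> OK" "c \<noteq> 0" "\<And>x. x \<in> a \<Longrightarrow> c * x \<in> OK"
  using assms unfolding frac_ideal_def by blast

lemma frac_ideal_submod: "frac_ideal K a \<Longrightarrow> O_submod K a"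
  unfolding frac_ideal_def by blast

lemma frac_ideal_subset_K: "frac_ideal K a \<Longrightarrow> a \<subseteq> K"
  unfolding frac_ideal_def by blast

lemma frac_ideal_nonzero_elem:
  assumes "frac_ideal K a"
  obtains x where "x \<in> a" "x \<noteq> 0"
  using assms unfolding frac_ideal_def O_submod_def by blast

lemma frac_ideal_mult:
  assumes a: "frac_ideal K a" and b: "frac_ideal K b"
  shows "frac_ideal K (ideal_mult K a b)"
proof -
  obtain x where "x \<in> a" "x \<noteq> 0"
    using a by (rule frac_ideal_nonzero_elem)
  moreover obtain y where "y \<in> b" "y \<noteq> 0"
    using b by (rule frac_ideal_nonzero_elem)
  ultimately have "x * y \<in> ideal_mult K a b" "x * y \<noteq> 0"
    by (simp_all add: ideal_mult_memI)
  then have nonzero: "ideal_mult K a b \<noteq> {0}"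
    by blast
  have sub: "ideal_mult K a b \<subseteq> K"
    using frac_ideal_subset_K[OF a] frac_ideal_subset_K[OF b]
    by (intro ideal_mult_least[OF O_submod_K] K_mult) auto
  obtain c1 where c1: "c1 \<in> OK" "c1 \<noteq> 0" "\<And>x. x \<in> a \<Longrightarrow> c1 * x \<in> OK"
    using frac_idealE[OF a] by blast
  obtain c2 where c2: "c2 \<in> OK" "c2 \<noteq> 0" "\<And>x. x \<in> b \<Longrightarrow> c2 * x \<in> OK"
    using frac_idealE[OF b] by blast
  have "ideal_mult K a b \<subseteq> {z. c1 * c2 * z \<in> OK}"
  proof (rule ideal_mult_least[OF O_submod_preimage_mult])
    fix x y
    assume "x \<in> a" "y \<in> b"
    then have "(c1 * x) * (c2 * y) \<in> OK"
      by (intro OK_mult c1(3) c2(3))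
    then show "x * y \<in> {z. c1 * c2 * z \<in> OK}"
      by (simp add: mult_ac)
  qed
  then show ?thesis
    using c1(2) c2(2) by (intro frac_idealI[OF sub nonzero ideal_mult_submod OK_mult[OF c1(1) c2(1)]]) auto
qed

lemma frac_ideal_principal:
  assumes "\<alpha> \<in> K" "\<alpha> \<noteq> 0"
  shows "frac_ideal K (ideal_gen K {\<alpha>})"
proof -
  obtain d :: int where d: "d > 0" "of_int d * \<alpha> \<in> OK"
    using assms(1) by (rule K_int_multiple_in_OK)
  show ?thesis
  proof (rule frac_idealI[of _ "of_int d"])
    show "ideal_gen K {\<alpha>} \<subseteq> K"
      unfolding ideal_gen_singleton using assms(1) by (auto intro: K_mult OK_subset_K)
    show "ideal_gen K {\<alpha>} \<noteq> {0}"
      using ideal_gen_superset[of "{\<alpha>}"] assms(2) by auto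
    show "(of_int d * z) \<in> OK" if "z \<in> ideal_gen K {\<alpha>}" for z
      using that d(2) unfolding ideal_gen_singleton by (auto simp: mult.assoc[symmetric] intro: OK_mult)
  qed (use d in \<open>simp_all add: ideal_gen_submod OK_of_int\<close>)
qed

lemma O_submod_image_cnj:
  assumes a: "O_submod K a"
  shows "O_submod K (cnj ` a)"
proof (rule O_submodI)
  show "0 \<in> cnj ` a"
    using O_submod_zero[OF a] by (intro image_eqI[of _ _ 0]) auto
next
  fix x y
  assume "x \<in> cnj ` a" "y \<in> cnj ` a"
  then obtain x' y' where "x' \<in> a" "y' \<in> a" "x = cnj x'" "y = cnj y'"
    by blast
  then show "x + y \<in> cnj ` a"
    using O_submod_add[OF a] by (intro image_eqI[of _ _ "x' + y'"]) auto
next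
  fix r x
  assume "r \<in> OK" "x \<in> cnj ` a"
  then obtain x' where "x' \<in> a" "x = cnj x'"
    by blast
  then show "r * x \<in> cnj ` a"
    using O_submod_mult[OF a OK_cnj[OF \<open>r \<in> OK\<close>]] by (intro image_eqI[of _ _ "cnj r * x'"]) auto
qed

lemma frac_ideal_cnj:
  assumes a: "frac_ideal K a"
  shows "frac_ideal K (cnj ` a)"
proof -
  obtain c where c: "c \<in> OK" "c \<noteq> 0" "\<And>x. x \<in> a \<Longrightarrow> c * x \<in> OK"
    using frac_idealE[OF a] by blast
  have "cnj ` a \<subseteq> K"
    using frac_ideal_subset_K[OF a] K_cnj by blast
  moreover have "cnj ` a \<noteq> {0}"
  proof -
    obtain x where "x \<in> a" "x \<noteq> 0"
      using a by (rule frac_ideal_nonzero_elem)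
    then show ?thesis
      by (metis complex_cnj_zero_iff imageI singletonD)
  qed
  moreover have "cnj c * z \<in> OK" if z: "z \<in> cnj ` a" for z
  proof -
    obtain x where "x \<in> a" "z = cnj x"
      using z by blast
    then show ?thesis
      using OK_cnj[OF c(3)] by simp
  qed
  ultimately show ?thesis
    using c O_submod_image_cnj[OF frac_ideal_submod[OF a]]
    by (intro frac_idealI[of _ "cnj c"]) (auto intro: OK_cnj)
qed

lemma frac_ideal_norm_denominator:
  assumes "frac_ideal K a"
  obtains M :: int where "M \<noteq> 0" "\<And>x. x \<in> a \<Longrightarrow> of_int M * (x * cnj x) \<in> \<int>"
proof -
  obtain c where c: "c \<in> OK" "c \<noteq> 0" "\<And>x. x \<in> a \<Longrightarrow> c * x \<in> OK"
    using frac_idealE[OF assms] by blast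
  obtain m where m: "c * cnj c = of_int m"
    using OK_norm_Ints[OF c(1)] by (metis Ints_cases)
  have "m \<noteq> 0"
    using m c(2) by (metis complex_cnj_zero_iff mult_eq_0_iff of_int_0)
  have "of_int (m * m) * (x * cnj x) \<in> \<int>" if "x \<in> a" for x
  proof -
    have "cnj c * (c * x) \<in> OK"
      using OK_mult[OF OK_cnj[OF c(1)] c(3)[OF that]] .
    then have "of_int m * x \<in> OK"
      by (simp add: mult_ac flip: m)
    from OK_norm_Ints[OF this] show ?thesis
      by (simp add: mult_ac)
  qed
  with \<open>m \<noteq> 0\<close> show ?thesis
    using that[of "m * m"] by simp
qed

text \<open>Polarization: the trace of \<open>x * cnj y\<close> is \<open>N(x + y) - N(x) - N(y)\<close> and its norm
  is \<open>N(x) * N(y)\<close>, where \<open>N(z) = z * cnj z\<close>.\<close>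

lemma OK_of_polarization:
  assumes x: "x \<in> K" and y: "y \<in> K" and g: "g \<in> \<rat>" "g \<noteq> 0"
    and "x * cnj x / g \<in> \<int>" "y * cnj y / g \<in> \<int>" "(x + y) * cnj (x + y) / g \<in> \<int>"
  shows "x * cnj y / g \<in> OK"
proof (rule OK_of_trace_norm)
  have cnj_g: "cnj g = g"
    using g(1) by (rule Rats_cnj)
  show "x * cnj y / g \<in> K"
    unfolding divide_inverse by (rule K_mult[OF K_mult[OF x K_cnj[OF y]] K_inverse[OF Rats_subset_K[OF g(1)]]])
  have "x * cnj y / g + cnj (x * cnj y / g)
      = (x + y) * cnj (x + y) / g - x * cnj x / g - y * cnj y / g"
    using g(2) by (simp add: cnj_g field_simps)
  then show "x * cnj y / g + cnj (x * cnj y / g) \<in> \<int>"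
    using assms(5-7) by simp
  have "x * cnj y / g * cnj (x * cnj y / g) = (x * cnj x / g) * (y * cnj y / g)"
    using g(2) by (simp add: cnj_g field_simps)
  then show "x * cnj y / g * cnj (x * cnj y / g) \<in> \<int>"
    using Ints_mult[OF assms(5,6)] by (simp only:)
qed

lemma O_submod_int_fraction_generator:
  assumes P: "O_submod K P" and "of_int k0 / of_int M \<in> P" "k0 \<noteq> 0"
  obtains n0 :: int where "n0 > 0" "of_int n0 / of_int M \<in> P"
    "\<And>k. of_int k / of_int M \<in> P \<Longrightarrow> n0 dvd k"
proof -
  define J where "J = {n :: int. of_int n / of_int M \<in> P}"
  have add: "m + n \<in> J" if "m \<in> J" "n \<in> J" for m n
    using that O_submod_add[OF P] unfolding J_def by (simp add: add_divide_distrib)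
  have mult: "k * n \<in> J" if "n \<in> J" for k n
  proof -
    have "of_int k * (of_int n / of_int M) \<in> P"
      using that unfolding J_def by (intro O_submod_of_int_mult[OF P]) simp
    then show ?thesis
      unfolding J_def by simp
  qed
  have "k0 \<in> J"
    using assms(2) unfolding J_def by simp
  then obtain n0 where n0: "n0 > 0" "n0 \<in> J" "\<And>k. k \<in> J \<Longrightarrow> n0 dvd k"
    using int_ideal_generator[of J, OF add mult _ \<open>k0 \<noteq> 0\<close>] by blast
  show ?thesis
    by (rule that) (use n0 in \<open>simp_all add: J_def\<close>)
qed

lemma frac_ideal_norm_generator:
  assumes a: "frac_ideal K a"
  obtains g where "g \<in> \<rat>" "g \<noteq> 0" "g \<in> ideal_mult K a (cnj ` a)"
    "\<And>x. x \<in> a \<Longrightarrow> x * cnj x / g \<in> \<int>"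
proof -
  obtain M :: int where M: "M \<noteq> 0" "\<And>x. x \<in> a \<Longrightarrow> of_int M * (x * cnj x) \<in> \<int>"
    using frac_ideal_norm_denominator[OF a] by blast
  have norm: "\<exists>k. of_int k / of_int M \<in> ideal_mult K a (cnj ` a) \<and> x * cnj x = of_int k / of_int M"
    if x: "x \<in> a" for x
  proof -
    obtain k where "of_int M * (x * cnj x) = of_int k"
      using M(2)[OF x] by (metis Ints_cases)
    then have "x * cnj x = of_int k / of_int M"
      using M(1) by (simp add: field_simps)
    moreover have "x * cnj x \<in> ideal_mult K a (cnj ` a)"
      using x by (intro ideal_mult_memI) auto
    ultimately show ?thesis
      by auto
  qed
  obtain x0 where "x0 \<in> a" "x0 \<noteq> 0"
    using a by (rule frac_ideal_nonzero_elem)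
  then obtain k0 where k0: "of_int k0 / of_int M \<in> ideal_mult K a (cnj ` a)" "k0 \<noteq> 0"
    using norm by fastforce
  obtain n0 :: int where n0: "n0 > 0" "of_int n0 / of_int M \<in> ideal_mult K a (cnj ` a)"
    "\<And>k. of_int k / of_int M \<in> ideal_mult K a (cnj ` a) \<Longrightarrow> n0 dvd k"
    using O_submod_int_fraction_generator[OF ideal_mult_submod k0] by blast
  show ?thesis
  proof (rule that[of "of_int n0 / of_int M"])
    show "x * cnj x / (of_int n0 / of_int M) \<in> \<int>" if x: "x \<in> a" for x
    proof -
      obtain k where "of_int k / of_int M \<in> ideal_mult K a (cnj ` a)" "x * cnj x = of_int k / of_int M"
        using norm[OF x] by blast
      moreover from this obtain j where "k = n0 * j"
        using n0(3) by blast
      ultimately show ?thesis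
        using n0(1) M(1) by simp
    qed
  qed (use n0 M(1) in simp_all)
qed

lemma frac_ideal_mult_cnj_principal:
  assumes a: "frac_ideal K a"
  obtains g where "g \<in> K" "g \<noteq> 0" "ideal_mult K a (cnj ` a) = ideal_gen K {g}"
proof -
  obtain g where g: "g \<in> \<rat>" "g \<noteq> 0" "g \<in> ideal_mult K a (cnj ` a)"
    and norm: "\<And>x. x \<in> a \<Longrightarrow> x * cnj x / g \<in> \<int>"
    using frac_ideal_norm_generator[OF a] by blast
  have "ideal_mult K a (cnj ` a) \<subseteq> ideal_gen K {g}"
  proof (rule ideal_mult_least[OF ideal_gen_submod])
    fix x y'
    assume "x \<in> a" "y' \<in> cnj ` a"
    then obtain y where "y \<in> a" "y' = cnj y"
      by blast
    then have "x * cnj y / g \<in> OK"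
      using \<open>x \<in> a\<close> frac_ideal_subset_K[OF a] O_submod_add[OF frac_ideal_submod[OF a]]
      by (intro OK_of_polarization g(1,2) norm) auto
    then show "x * y' \<in> ideal_gen K {g}"
      unfolding ideal_gen_singleton \<open>y' = cnj y\<close> using g(2)
      by (intro image_eqI[of _ _ "x * cnj y / g"]) simp_all
  qed
  moreover have "ideal_gen K {g} \<subseteq> ideal_mult K a (cnj ` a)"
    using g(3) by (intro ideal_gen_least[OF ideal_mult_submod]) simp
  ultimately show ?thesis
    using that g(1,2) Rats_subset_K by blast
qed

end

section \<open>The ideal class group\<close>

context imag_quad
begin

lemma ideal_equivI: "\<alpha> \<in> K \<Longrightarrow> \<alpha> \<noteq> 0 \<Longrightarrow> ideal_equiv K a ((\<lambda>x. \<alpha> * x) ` a)"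
  unfolding ideal_equiv_def by blast

lemma ideal_equivE:
  assumes "ideal_equiv K a b"
  obtains \<alpha> where "\<alpha> \<in> K" "\<alpha> \<noteq> 0" "b = (\<lambda>x. \<alpha> * x) ` a"
  using assms unfolding ideal_equiv_def by blast

lemma ideal_equiv_refl: "ideal_equiv K a a"
  using ideal_equivI[of 1 a] Rats_subset_K[of 1] by simp

lemma ideal_equiv_sym:
  assumes "ideal_equiv K a b"
  shows "ideal_equiv K b a"
proof -
  obtain \<alpha> where \<alpha>: "\<alpha> \<in> K" "\<alpha> \<noteq> 0" and b: "b = (\<lambda>x. \<alpha> * x) ` a"
    using assms by (rule ideal_equivE)
  have "a = (\<lambda>x. inverse \<alpha> * x) ` b"
    unfolding b image_mult_image_mult using \<alpha>(2) by simp
  then show ?thesis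
    using \<alpha> ideal_equivI[of "inverse \<alpha>" b] K_inverse by simp
qed

lemma ideal_equiv_trans:
  assumes "ideal_equiv K a b" "ideal_equiv K b c"
  shows "ideal_equiv K a c"
proof -
  obtain \<alpha> \<beta> where "\<alpha> \<in> K" "\<alpha> \<noteq> 0" "b = (\<lambda>x. \<alpha> * x) ` a"
    and "\<beta> \<in> K" "\<beta> \<noteq> 0" "c = (\<lambda>x. \<beta> * x) ` b"
    using assms by (metis ideal_equivE)
  then show ?thesis
    using ideal_equivI[of "\<beta> * \<alpha>" a] K_mult by (simp add: image_mult_image_mult)
qed

lemma ideal_equiv_mult_left:
  assumes "O_submod K b" "O_submod K x" "ideal_equiv K x y"
  shows "ideal_equiv K (ideal_mult K b x) (ideal_mult K b y)"
proof -
  obtain \<alpha> where \<alpha>: "\<alpha> \<in> K" "\<alpha> \<noteq> 0" and y: "y = (\<lambda>z. \<alpha> * z) ` x"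
    using assms(3) by (rule ideal_equivE)
  have "ideal_mult K b y = ideal_mult K (ideal_gen K {\<alpha>}) (ideal_mult K b x)"
    unfolding y ideal_mult_principal[OF assms(2), symmetric]
    by (metis ideal_mult_assoc ideal_mult_commute)
  also have "\<dots> = (\<lambda>z. \<alpha> * z) ` ideal_mult K b x"
    by (rule ideal_mult_principal[OF ideal_mult_submod])
  finally show ?thesis
    using ideal_equivI[OF \<alpha>] by simp
qed

lemma ideal_equiv_cancel_left:
  assumes a: "frac_ideal K a" and x: "frac_ideal K x" and y: "frac_ideal K y"
    and equiv: "ideal_equiv K (ideal_mult K a x) (ideal_mult K a y)"
  shows "ideal_equiv K x y"
proof -
  obtain g where g: "g \<in> K" "g \<noteq> 0" and a_cnj: "ideal_mult K a (cnj ` a) = ideal_gen K {g}"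
    using frac_ideal_mult_cnj_principal[OF a] by blast
  have scaled: "ideal_mult K (cnj ` a) (ideal_mult K a z) = (\<lambda>u. g * u) ` z" if "frac_ideal K z" for z
    using ideal_mult_principal[OF frac_ideal_submod[OF that], of g] a_cnj
    by (metis ideal_mult_assoc ideal_mult_commute)
  have "ideal_equiv K ((\<lambda>u. g * u) ` x) ((\<lambda>u. g * u) ` y)"
    using ideal_equiv_mult_left[OF frac_ideal_submod[OF frac_ideal_cnj[OF a]] ideal_mult_submod equiv]
    by (simp only: scaled x y)
  then show ?thesis
    using ideal_equivI[OF g, of x] ideal_equiv_sym[OF ideal_equivI[OF g, of y]] ideal_equiv_trans
    by blast
qed

definition ideal_class :: "complex set \<Rightarrow> complex set set" where
  "ideal_class a = {b. frac_ideal K b \<and> ideal_equiv K a b}"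

definition class_rep :: "complex set set \<Rightarrow> complex set" where
  "class_rep X = (SOME b. b \<in> X)"

lemma class_group_eq: "class_group K = {ideal_class a | a. frac_ideal K a}"
  unfolding class_group_def ideal_class_def ..

lemma ideal_class_eq_iff:
  assumes "frac_ideal K a" "frac_ideal K b"
  shows "ideal_class a = ideal_class b \<longleftrightarrow> ideal_equiv K a b"
  using assms ideal_equiv_refl ideal_equiv_sym ideal_equiv_trans
  unfolding ideal_class_def by blast

lemma class_rep:
  assumes "X \<in> class_group K"
  shows "frac_ideal K (class_rep X)" "ideal_class (class_rep X) = X"
proof -
  obtain b where b: "frac_ideal K b" "X = ideal_class b"
    using assms unfolding class_group_eq by blast
  then have "b \<in> X"
    unfolding ideal_class_def using ideal_equiv_refl by blast
  then have "class_rep X \<in> X"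
    unfolding class_rep_def by (rule someI)
  then have rep: "frac_ideal K (class_rep X)" "ideal_equiv K b (class_rep X)"
    using b(2) unfolding ideal_class_def by auto
  then show "frac_ideal K (class_rep X)" "ideal_class (class_rep X) = X"
    using b ideal_class_eq_iff[OF b(1) rep(1)] by simp_all
qed

lemma ideal_equiv_class_rep:
  assumes "frac_ideal K a"
  shows "ideal_equiv K a (class_rep (ideal_class a))"
proof -
  have "ideal_class a \<in> class_group K"
    unfolding class_group_eq using assms by blast
  then show ?thesis
    using class_rep ideal_class_eq_iff assms by metis
qed

lemma class_group_translate_bij:
  assumes "finite (class_group K)" "frac_ideal K a"
  shows "bij_betw (\<lambda>X. ideal_class (ideal_mult K a (class_rep X))) (class_group K) (class_group K)"
proof -
  let ?t = "\<lambda>X. ideal_class (ideal_mult K a (class_rep X))"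
  have maps_to: "?t X \<in> class_group K" if "X \<in> class_group K" for X
    unfolding class_group_eq using frac_ideal_mult[OF assms(2) class_rep(1)[OF that]] by blast
  have "inj_on ?t (class_group K)"
  proof (rule inj_onI)
    fix X Y
    assume X: "X \<in> class_group K" and Y: "Y \<in> class_group K" and "?t X = ?t Y"
    then have "ideal_equiv K (ideal_mult K a (class_rep X)) (ideal_mult K a (class_rep Y))"
      using ideal_class_eq_iff frac_ideal_mult[OF assms(2)] class_rep(1) by metis
    then have "ideal_equiv K (class_rep X) (class_rep Y)"
      using ideal_equiv_cancel_left[OF assms(2)] class_rep(1)[OF X] class_rep(1)[OF Y] by blast
    then show "X = Y"
      using ideal_class_eq_iff class_rep[OF X] class_rep[OF Y] by metis
  qed
  moreover have "?t ` class_group K = class_group K"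
    using maps_to assms(1) calculation by (intro endo_inj_surj) auto
  ultimately show ?thesis
    unfolding bij_betw_def by blast
qed

text \<open>Translation by the class of \<open>a\<close> permutes the finite class group, so comparing the
  products of \<open>\<psi>\<close> over all classes before and after translation gives \<open>\<psi> a ^ h = 1\<close>.\<close>

lemma class_character_power_class_number:
  fixes \<psi> :: "complex set \<Rightarrow> complex"
  assumes fin: "finite (class_group K)"
    and mult: "\<And>a b. frac_ideal K a \<Longrightarrow> frac_ideal K b \<Longrightarrow> \<psi> (ideal_mult K a b) = \<psi> a * \<psi> b"
    and equiv: "\<And>a b. frac_ideal K a \<Longrightarrow> frac_ideal K b \<Longrightarrow> ideal_equiv K a b \<Longrightarrow> \<psi> b = \<psi> a"
    and nonzero: "\<And>a. frac_ideal K a \<Longrightarrow> \<psi> a \<noteq> 0"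
    and a: "frac_ideal K a"
  shows "\<psi> a ^ class_number K = 1"
proof -
  let ?t = "\<lambda>X. ideal_class (ideal_mult K a (class_rep X))"
  let ?\<Psi> = "\<lambda>X. \<psi> (class_rep X)"
  have translate: "?\<Psi> (?t X) = \<psi> a * ?\<Psi> X" if "X \<in> class_group K" for X
  proof -
    have "frac_ideal K (ideal_mult K a (class_rep X))"
      using frac_ideal_mult[OF a class_rep(1)[OF that]] .
    then have "?\<Psi> (?t X) = \<psi> (ideal_mult K a (class_rep X))"
      using equiv ideal_equiv_class_rep class_rep(1) class_group_translate_bij[OF fin a] that
      by (metis bij_betwE)
    also have "\<dots> = \<psi> a * ?\<Psi> X"
      using mult[OF a class_rep(1)[OF that]] .
    finally show ?thesis .
  qed
  have "prod ?\<Psi> (class_group K) = prod ?\<Psi> (?t ` class_group K)"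
    using class_group_translate_bij[OF fin a] by (simp add: bij_betw_def)
  also have "\<dots> = prod (?\<Psi> \<circ> ?t) (class_group K)"
    using class_group_translate_bij[OF fin a] by (intro prod.reindex) (simp add: bij_betw_def)
  also have "\<dots> = prod (\<lambda>X. \<psi> a * ?\<Psi> X) (class_group K)"
    using translate by (intro prod.cong) auto
  also have "\<dots> = \<psi> a ^ class_number K * prod ?\<Psi> (class_group K)"
    by (simp add: prod.distrib class_number_def)
  finally show ?thesis
    using fin nonzero class_rep(1) by simp
qed

lemma hecke_char_m2_image_mult:
  assumes chi: "hecke_char_m2 K chi" and a: "frac_ideal K a" and "\<alpha> \<in> K" "\<alpha> \<noteq> 0"
  shows "chi ((\<lambda>x. \<alpha> * x) ` a) = inverse (\<alpha> ^ 2) * chi a"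
proof -
  have "chi ((\<lambda>x. \<alpha> * x) ` a) = chi (ideal_mult K (ideal_gen K {\<alpha>}) a)"
    by (simp add: ideal_mult_principal[OF frac_ideal_submod[OF a]])
  also have "\<dots> = inverse (\<alpha> ^ 2) * chi a"
    using chi frac_ideal_principal[OF assms(3,4)] a assms(3,4) unfolding hecke_char_m2_def by simp
  finally show ?thesis .
qed

end

section \<open>Continuation at 0\<close>

definition has_cont_value :: "(complex \<Rightarrow> 'b \<Rightarrow> complex) \<Rightarrow> 'b set \<Rightarrow> complex \<Rightarrow> bool" where
  "has_cont_value F A w \<longleftrightarrow> (\<exists>g S \<sigma>. \<not> (\<exists>z. z islimpt S) \<and> 0 \<notin> S \<and> g holomorphic_on (- S) \<and>
     (\<forall>s. Re s > \<sigma> \<longrightarrow> s \<notin> S \<and> F s summable_on A \<and> g s = infsum (F s) A) \<and> g 0 = w)"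

lemma cont_at_0_eq:
  "cont_at_0 F A = (if \<exists>w. has_cont_value F A w then THE w. has_cont_value F A w else 0)"
  unfolding cont_at_0_def has_cont_value_def Let_def ..

text \<open>Two continuations agree on a right half-plane, hence on the complement of the union
  of their singular sets, which is open and connected (a countable closed set removed from
  \<open>\<complex>\<close>).\<close>

lemma has_cont_value_unique:
  assumes "has_cont_value F A w1" "has_cont_value F A w2"
  shows "w1 = w2"
proof -
  obtain g1 S1 \<sigma>1 where 1: "\<not> (\<exists>z. z islimpt S1)" "0 \<notin> S1" "g1 holomorphic_on (- S1)"
     "\<forall>s. Re s > \<sigma>1 \<longrightarrow> s \<notin> S1 \<and> F s summable_on A \<and> g1 s = infsum (F s) A" "g1 0 = w1"
    using assms(1) unfolding has_cont_value_def by blast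
  obtain g2 S2 \<sigma>2 where 2: "\<not> (\<exists>z. z islimpt S2)" "0 \<notin> S2" "g2 holomorphic_on (- S2)"
     "\<forall>s. Re s > \<sigma>2 \<longrightarrow> s \<notin> S2 \<and> F s summable_on A \<and> g2 s = infsum (F s) A" "g2 0 = w2"
    using assms(2) unfolding has_cont_value_def by blast
  define T where "T = S1 \<union> S2"
  have no_limpt: "\<not> z islimpt T" for z
    using 1(1) 2(1) unfolding T_def islimpt_Un by blast
  then have "T sparse_in UNIV"
    by (simp add: sparse_in_open)
  then have "countable T"
    using sparse_imp_countable[of UNIV T] by simp
  then have conn: "connected (- T)"
    using connected_open_diff_countable[of UNIV T] by (simp add: Compl_eq_Diff_UNIV connected_UNIV)
  have op: "open (- T)"
    using no_limpt by (simp add: closed_limpt open_Compl)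
  define H where "H = {z. Re z > max \<sigma>1 \<sigma>2}"
  have "complex_of_real (max \<sigma>1 \<sigma>2 + 1) \<in> H"
    unfolding H_def by (simp add: max_def)
  then have ne: "H \<noteq> {}"
    by blast
  have "open H"
    unfolding H_def by (rule open_halfspace_Re_gt)
  have sub: "H \<subseteq> - T"
    unfolding H_def T_def using 1(4) 2(4) by auto
  have holo: "g1 holomorphic_on (- T)" "g2 holomorphic_on (- T)"
    using 1(3) 2(3) by (auto simp: T_def elim: holomorphic_on_subset)
  have eq: "g1 z = g2 z" if "z \<in> H" for z
    using that 1(4) 2(4) unfolding H_def by simp
  have "0 \<in> - T"
    using 1(2) 2(2) unfolding T_def by simp
  then have "g1 0 = g2 0"
    using analytic_continuation_open[OF \<open>open H\<close> op ne conn sub holo eq] by blast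
  then show ?thesis
    using 1(5) 2(5) by simp
qed

lemma has_cont_value_cmult:
  assumes "has_cont_value F A w"
  shows "has_cont_value (\<lambda>s x. c * F s x) A (c * w)"
proof -
  obtain g S \<sigma> where g: "\<not> (\<exists>z. z islimpt S)" "0 \<notin> S" "g holomorphic_on (- S)"
     "\<forall>s. Re s > \<sigma> \<longrightarrow> s \<notin> S \<and> F s summable_on A \<and> g s = infsum (F s) A" "g 0 = w"
    using assms unfolding has_cont_value_def by blast
  have "(\<lambda>s. c * g s) holomorphic_on (- S)"
    using g(3) by (intro holomorphic_intros)
  moreover have "(\<lambda>x. c * F s x) summable_on A \<and> c * g s = infsum (\<lambda>x. c * F s x) A"
    if "Re s > \<sigma>" for s
    using g(4) that by (simp add: summable_on_cmult_right infsum_cmult_right)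
  ultimately show ?thesis
    unfolding has_cont_value_def using g by blast
qed

lemma cont_at_0_cmult:
  assumes "c \<noteq> 0"
  shows "cont_at_0 (\<lambda>s x. c * F s x) A = c * cont_at_0 F A"
proof (cases "\<exists>w. has_cont_value F A w")
  case True
  then obtain w where w: "has_cont_value F A w"
    by blast
  then have cw: "has_cont_value (\<lambda>s x. c * F s x) A (c * w)"
    by (rule has_cont_value_cmult)
  have "(THE w. has_cont_value F A w) = w"
    using w has_cont_value_unique by blast
  moreover have "(THE w. has_cont_value (\<lambda>s x. c * F s x) A w) = c * w"
    using cw has_cont_value_unique by blast
  ultimately show ?thesis
    unfolding cont_at_0_eq using w cw by auto
next
  case False
  have "\<not> has_cont_value (\<lambda>s x. c * F s x) A w" for w
  proof
    assume "has_cont_value (\<lambda>s x. c * F s x) A w"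
    then have "has_cont_value (\<lambda>s x. inverse c * (c * F s x)) A (inverse c * w)"
      by (rule has_cont_value_cmult)
    moreover have "(\<lambda>s x. inverse c * (c * F s x)) = F"
      using assms by (intro ext) (simp add: field_simps)
    ultimately show False
      using False by simp
  qed
  then have "\<not> (\<exists>w. has_cont_value (\<lambda>s x. c * F s x) A w)"
    by blast
  then show ?thesis
    unfolding cont_at_0_eq using False by (simp only: if_False mult_zero_right)
qed

section \<open>The Eisenstein lattice\<close>

lemma countable_fin_ext:
  assumes "fin_ext K L" "countable K"
  shows "countable L"
proof -
  obtain B where "finite B" and L: "L = {(\<Sum>b\<in>B. f b * b) | f. \<forall>b\<in>B. f b \<in> K}"
    using assms(1) unfolding fin_ext_def by blast
  have "L \<subseteq> (\<lambda>f. \<Sum>b\<in>B. f b * b) ` Pi\<^sub>E B (\<lambda>_. K)"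
  proof
    fix x
    assume "x \<in> L"
    then obtain f where f: "\<forall>b\<in>B. f b \<in> K" "x = (\<Sum>b\<in>B. f b * b)"
      unfolding L by blast
    then have "x = (\<Sum>b\<in>B. restrict f B b * b)"
      by simp
    moreover have "restrict f B \<in> Pi\<^sub>E B (\<lambda>_. K)"
      using f(1) by simp
    ultimately show "x \<in> (\<lambda>f. \<Sum>b\<in>B. f b * b) ` Pi\<^sub>E B (\<lambda>_. K)"
      by blast
  qed
  moreover have "countable ((\<lambda>f. \<Sum>b\<in>B. f b * b) ` Pi\<^sub>E B (\<lambda>_. K))"
    using \<open>finite B\<close> assms(2) by (intro countable_image countable_PiE)
  ultimately show ?thesis
    by (rule countable_subset)
qed

text \<open>\<open>class_number\<close> is a cardinality, so it is 0 for an infinite class group, and then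
  the hypothesis puts every complex number into \<open>F\<close>.\<close>

lemma finite_class_group_if_roots_of_unity_in:
  fixes F :: "complex set"
  assumes "countable F" "\<forall>\<zeta>. \<zeta> ^ class_number K = 1 \<longrightarrow> \<zeta> \<in> F"
  shows "finite (class_group K)"
proof (rule ccontr)
  assume "infinite (class_group K)"
  then have "class_number K = 0"
    unfolding class_number_def by simp
  then have "UNIV \<subseteq> F"
    using assms(2) by auto
  then show False
    using assms(1) uncountable_UNIV_complex countable_subset by blast
qed

lemma ints_of_mult:
  assumes "subfield F" "x \<in> ints_of F" "y \<in> ints_of F"
  shows "x * y \<in> ints_of F"
proof -
  have "x * y \<in> F"
    using assms unfolding subfield_def ints_of_def by blast
  moreover have "algebraic_int (x * y)"
    using assms(2,3) unfolding ints_of_def alg_int_iff_algebraic_int by (simp add: algebraic_int_mult)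
  ultimately show ?thesis
    unfolding ints_of_def alg_int_iff_algebraic_int by simp
qed

lemma E_form_eq_inverse_mult:
  assumes "chi a \<noteq> 0"
  shows "E_form K chi a z v k = inverse (chi a) * E_form K (\<lambda>_. 1) a z v k"
proof -
  have "(\<lambda>s (c, d). inverse (chi a) * complex_of_real (ideal_norm K a) powr s * eta z v c d s k)
      = (\<lambda>s x. inverse (chi a) * (\<lambda>s (c, d). inverse 1 * complex_of_real (ideal_norm K a) powr s
          * eta z v c d s k) s x)"
    by (intro ext) (simp add: split_beta mult.assoc)
  then show ?thesis
    unfolding E_form_def using assms by (simp add: cont_at_0_cmult)
qed

lemma L_Eis_subset:
  assumes F: "subfield F"
    and nonzero: "\<And>a. frac_ideal K a \<Longrightarrow> chi1 a \<noteq> 0" "\<And>a. frac_ideal K a \<Longrightarrow> chi2 a \<noteq> 0"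
    and ratio: "\<And>a. frac_ideal K a \<Longrightarrow> chi2 a / chi1 a \<in> ints_of F"
  shows "L_Eis K F chi1 \<subseteq> L_Eis K F chi2"
proof
  fix f
  assume "f \<in> L_Eis K F chi1"
  then obtain A r where A: "finite A" "\<forall>a\<in>A. frac_ideal K a" "\<forall>a\<in>A. r a \<in> ints_of F"
    and f: "f = (\<lambda>z v k. \<Sum>a\<in>A. r a * E_form K chi1 a z v k)"
    unfolding L_Eis_def by blast
  define r' where "r' a = r a * (chi2 a / chi1 a)" for a
  have "r a * E_form K chi1 a z v k = r' a * E_form K chi2 a z v k" if "a \<in> A" for a z v k
    using nonzero[of a] A(2) that unfolding r'_def
    by (simp add: E_form_eq_inverse_mult[of chi1] E_form_eq_inverse_mult[of chi2] field_simps)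
  then have "f = (\<lambda>z v k. \<Sum>a\<in>A. r' a * E_form K chi2 a z v k)"
    unfolding f by (intro ext sum.cong) auto
  moreover have "\<forall>a\<in>A. r' a \<in> ints_of F"
    using A(2,3) ratio ints_of_mult[OF F] unfolding r'_def by blast
  ultimately show "f \<in> L_Eis K F chi2"
    unfolding L_Eis_def using A(1,2) by blast
qed

context imag_quad
begin

lemma class_number_pos:
  assumes "finite (class_group K)"
  shows "class_number K > 0"
proof -
  have "frac_ideal K (ideal_gen K {1})"
    by (rule frac_ideal_principal) (simp_all add: Rats_subset_K)
  then have "class_group K \<noteq> {}"
    unfolding class_group_eq by blast
  then show ?thesis
    using assms unfolding class_number_def by (simp add: card_gt_0_iff)
qed

lemma hecke_char_m2_ratio_power:
  assumes "finite (class_group K)" "hecke_char_m2 K chi1" "hecke_char_m2 K chi2" "frac_ideal K a"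
  shows "(chi2 a / chi1 a) ^ class_number K = 1"
proof (rule class_character_power_class_number[where \<psi> = "\<lambda>a. chi2 a / chi1 a"])
  fix a b
  assume "frac_ideal K a" "frac_ideal K b"
  then show "chi2 (ideal_mult K a b) / chi1 (ideal_mult K a b) = chi2 a / chi1 a * (chi2 b / chi1 b)"
    using assms(2,3) unfolding hecke_char_m2_def by simp
  assume "ideal_equiv K a b"
  then obtain \<alpha> where "\<alpha> \<in> K" "\<alpha> \<noteq> 0" "b = (\<lambda>x. \<alpha> * x) ` a"
    by (rule ideal_equivE)
  then show "chi2 b / chi1 b = chi2 a / chi1 a"
    using hecke_char_m2_image_mult[OF assms(2) \<open>frac_ideal K a\<close>]
      hecke_char_m2_image_mult[OF assms(3) \<open>frac_ideal K a\<close>] by simp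
qed (use assms in \<open>auto simp: hecke_char_m2_def\<close>)

lemma L_Eis_subset_hecke:
  assumes F: "subfield F" and fin: "finite (class_group K)"
    and roots: "\<forall>\<zeta>. \<zeta> ^ class_number K = 1 \<longrightarrow> \<zeta> \<in> F"
    and chi1: "hecke_char_m2 K chi1" and chi2: "hecke_char_m2 K chi2"
  shows "L_Eis K F chi1 \<subseteq> L_Eis K F chi2"
proof (rule L_Eis_subset[OF F])
  fix a
  assume "frac_ideal K a"
  then have "(chi2 a / chi1 a) ^ class_number K = 1"
    by (rule hecke_char_m2_ratio_power[OF fin chi1 chi2])
  then show "chi2 a / chi1 a \<in> ints_of F"
    using roots algebraic_int_root_of_unity class_number_pos[OF fin]
    unfolding ints_of_def alg_int_iff_algebraic_int by blast
qed (use chi1 chi2 in \<open>auto simp: hecke_char_m2_def\<close>)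

end

theorem mainTheorem7:
  fixes K H F :: "complex set" and chi chi2 :: "complex set \<Rightarrow> complex"
  assumes "imag_quadratic K"
    and "units_of_ring (ints_of K) = {1, -1}"
    and "hilbert_class_field K H"
    and "galois_ext H F"
    and "\<forall>a. frac_ideal K a \<longrightarrow> chi a \<in> F"
    and "\<forall>\<zeta>. \<zeta> ^ class_number K = 1 \<longrightarrow> \<zeta> \<in> F"
    and "hecke_char_m2 K chi"
    and "hecke_char_m2 K chi2"
  shows "L_Eis K F chi = L_Eis K F chi2"
proof -
  \<comment> \<open>The tower \<open>K \<subseteq> H \<subseteq> F\<close> only serves to make \<open>F\<close> countable.\<close>
  obtain D :: int where "D < 0" "K = {a + b * csqrt (of_int D) | a b. a \<in> \<rat> \<and> b \<in> \<rat>}"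
    using assms(1) unfolding imag_quadratic_def by blast
  then interpret imag_quad K D
    by unfold_locales
  have KH: "fin_ext K H"
    using assms(3) unfolding hilbert_class_field_def abelian_ext_def galois_ext_def by blast
  have HF: "fin_ext H F"
    using assms(4) unfolding galois_ext_def by blast
  have "countable F"
    by (rule countable_fin_ext[OF HF countable_fin_ext[OF KH countable_K]])
  then have "finite (class_group K)"
    using assms(6) by (rule finite_class_group_if_roots_of_unity_in)
  moreover have "subfield F"
    using HF unfolding fin_ext_def by blast
  ultimately show ?thesis
    using L_Eis_subset_hecke assms(6-8) by (intro equalityI) blast+
qed

end
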